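(* Let $\lambda>0$, let $n\ge 1$, and let $h:\mathbb{R}\to\mathbb{R}\cup\{+\infty\}$ be proper, closed and convex, such that $0\in\mathrm{dom}(h)$, $h(0)=0$, and $0$ is an accumulation point of $\mathrm{dom}(h)$. Let $\nu=(\mathcal{S}_0,\mathcal{S}_1,\mathcal{S}_\bullet)$ be a partition of $\{1,\dots,n\}$ and define $g^\nu:\mathbb{R}^n\to\mathbb{R}\cup\{+\infty\}$ by $$g^\nu(\mathbf{x})=\lambda\|\mathbf{x}\|_0+\sum_{i=1}^n h(x_i)+\eta(\mathbf{x}\in\mathcal{X}^\nu).$$ Then the convex conjugate $(g^\nu)^*$ is separable, i.e. $(g^\nu)^*(\mathbf{v})=\sum_{i=1}^n (g^\nu_i)^*(v_i)$, where for every $v\in\mathbb{R}$ $$(g^\nu_i)^*(v)=\begin{cases}0 & \text{if } i\in\mathcal{S}_0,\\ h^*(v)-\lambda & \text{if } i\in\mathcal{S}_1,\\ \max\big(h^*(v)-\lambda,0\big) & \text{if } i\in\mathcal{S}_\bullet.\end{cases}$$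
   Context: $\|\mathbf{x}\|_0$ denotes the number of nonzero entries of $\mathbf{x}$. $\eta(\cdot)$ is the convex indicator: $\eta(\text{condition})=0$ if the condition holds and $+\infty$ otherwise. For a partition $\nu=(\mathcal{S}_0,\mathcal{S}_1,\mathcal{S}_\bullet)$ of $\{1,\dots,n\}$, the region is $\mathcal{X}^\nu=\{\mathbf{x}\in\mathbb{R}^n: x_i=0\ \forall i\in\mathcal{S}_0,\ x_i\neq 0\ \forall i\in\mathcal{S}_1\}$ (entries indexed by $\mathcal{S}_\bullet$ are free). $h^*$ denotes the convex conjugate $h^*(v)=\sup_{x\in\mathbb{R}} vx-h(x)$. A point $0$ is an accumulation point of a set $\mathcal{C}\subseteq\mathbb{R}$ if every neighborhood of $0$ contains a point of $\mathcal{C}$ other than $0$. *)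

theory Defs
  imports "HOL-Analysis.Analysis"
begin

definition convex_conj :: "('a::real_inner \<Rightarrow> ereal) \<Rightarrow> 'a \<Rightarrow> ereal" where
  "convex_conj f v = (SUP x. ereal (v \<bullet> x) - f x)"

definition edom :: "('a \<Rightarrow> ereal) \<Rightarrow> 'a set" where
  "edom f = {x. f x < \<infinity>}"

definition proper_fun :: "('a \<Rightarrow> ereal) \<Rightarrow> bool" where
  "proper_fun f \<longleftrightarrow> (\<forall>x. f x \<noteq> -\<infinity>) \<and> (\<exists>x. f x < \<infinity>)"

definition epi :: "('a \<Rightarrow> ereal) \<Rightarrow> ('a \<times> real) set" where
  "epi f = {(x, t). f x \<le> ereal t}"

definition closed_fun :: "('a::topological_space \<Rightarrow> ereal) \<Rightarrow> bool" where
  "closed_fun f \<longleftrightarrow> closed (epi f)"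

definition convex_fun :: "('a::real_vector \<Rightarrow> ereal) \<Rightarrow> bool" where
  "convex_fun f \<longleftrightarrow> convex (epi f)"

definition l0norm :: "real ^ 'n \<Rightarrow> nat" where
  "l0norm x = card {i. x $ i \<noteq> 0}"

definition region :: "'n set \<Rightarrow> 'n set \<Rightarrow> (real ^ 'n) set" where
  "region S0 S1 = {x. (\<forall>i\<in>S0. x $ i = 0) \<and> (\<forall>i\<in>S1. x $ i \<noteq> 0)}"

definition eta :: "bool \<Rightarrow> ereal" where
  "eta b = (if b then 0 else \<infinity>)"

definition g_nu :: "real \<Rightarrow> (real \<Rightarrow> ereal) \<Rightarrow> 'n::finite set \<Rightarrow> 'n set \<Rightarrow> real ^ 'n \<Rightarrow> ereal" where
  "g_nu lam h S0 S1 x =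
     ereal (lam * real (l0norm x)) + (\<Sum>i\<in>UNIV. h (x $ i)) + eta (x \<in> region S0 S1)"

end

theory Submission
  imports Defs
begin

text \<open>
  The function g_nu is separable: g_nu(x) = \<Sum>i. g_i(x_i) with
  g_i(t) = \<lambda>[t \<noteq> 0] + h(t) + \<eta>(t \<in> C_i), where C_i is {0}, \<real> - {0} or \<real> according as
  i lies in S0, S1 or Sb. A supremum of a sum of functions of independent variables is the
  sum of the suprema, so the conjugate of g_nu is the sum of the conjugates of the g_i.
  For C_i = {0} this conjugate is -h(0) = 0, and for C_i = \<real> it is the maximum of the values
  for {0} and for \<real> - {0}. The remaining case C_i = \<real> - {0} gives
  sup {vt - h(t) | t \<noteq> 0} - \<lambda>, and this punctured supremum is still h*(v): for y \<noteq> 0 in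
  dom h, convexity and h(0) = 0 give h(sy) \<le> s h(y) for 0 \<le> s \<le> 1, so vt - h(t) comes
  arbitrarily close to its value 0 at t = 0 along t = sy \<rightarrow> 0.
\<close>

lemma sum_ereal_neq_MInfty:
  fixes b :: "'i \<Rightarrow> ereal"
  assumes "\<And>i. i \<in> I \<Longrightarrow> b i \<noteq> -\<infinity>"
  shows "sum b I \<noteq> -\<infinity>"
  using assms by (induction I rule: infinite_finite_induct) auto

lemma ereal_minus_sum:
  fixes b :: "'i \<Rightarrow> ereal"
  assumes "finite I" "\<And>i. i \<in> I \<Longrightarrow> b i \<noteq> -\<infinity>"
  shows "ereal (\<Sum>i\<in>I. a i) - sum b I = (\<Sum>i\<in>I. ereal (a i) - b i)"
  using assms
proof (induction I rule: finite_induct)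
  case (insert j I)
  have "b j \<noteq> -\<infinity>" "sum b I \<noteq> -\<infinity>"
    using insert.prems sum_ereal_neq_MInfty[of I b] by auto
  then have "ereal (a j + (\<Sum>i\<in>I. a i)) - (b j + sum b I)
      = (ereal (a j) - b j) + (ereal (\<Sum>i\<in>I. a i) - sum b I)"
    by (cases "b j"; cases "sum b I") auto
  with insert show ?case by simp
qed simp

lemma ereal_less_sum_split:
  fixes c :: "'i \<Rightarrow> ereal"
  assumes "finite I" "\<And>i. i \<in> I \<Longrightarrow> c i \<noteq> -\<infinity>" "ereal M < sum c I"
  shows "\<exists>m. M < (\<Sum>i\<in>I. m i) \<and> (\<forall>i\<in>I. ereal (m i) < c i)"
  using assms
proof (induction I arbitrary: M rule: finite_induct)
  case (insert j I)
  have "c j \<noteq> -\<infinity>" "sum c I \<noteq> -\<infinity>"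
    using insert.prems sum_ereal_neq_MInfty[of I c] by auto
  with insert.prems(2) insert.hyps have "ereal M - c j < sum c I"
    by (cases "c j"; cases "sum c I") auto
  then obtain z where z: "ereal M - c j < ereal z" "ereal z < sum c I"
    using ereal_dense2 by blast
  then have j: "ereal (M - z) < c j"
    using \<open>c j \<noteq> -\<infinity>\<close> by (cases "c j") auto
  obtain m where m: "z < (\<Sum>i\<in>I. m i)" "\<forall>i\<in>I. ereal (m i) < c i"
    using insert.IH[OF _ z(2)] insert.prems by blast
  let ?m = "m(j := M - z)"
  have "(\<Sum>i\<in>I. ?m i) = (\<Sum>i\<in>I. m i)"
    using insert.hyps by (intro sum.cong) auto
  then have "M < (\<Sum>i\<in>insert j I. ?m i)"
    using insert.hyps m(1) by simp
  moreover have "\<forall>i\<in>insert j I. ereal (?m i) < c i"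
    using insert.hyps m(2) j by auto
  ultimately show ?case by blast
qed simp

lemma fenchel_young: "ereal (v \<bullet> x) - f x \<le> convex_conj f v"
  unfolding convex_conj_def by (rule SUP_upper2[of x]) auto

lemma convex_conj_neq_MInfty:
  assumes "proper_fun f"
  shows "convex_conj f v \<noteq> -\<infinity>"
proof -
  obtain x where "f x < \<infinity>" "f x \<noteq> -\<infinity>"
    using assms unfolding proper_fun_def by blast
  then have "ereal (v \<bullet> x) - f x \<noteq> -\<infinity>" by (cases "f x") auto
  then show ?thesis using fenchel_young[of v x f] by auto
qed

lemma convex_conj_separable:
  fixes f :: "'n::finite \<Rightarrow> real \<Rightarrow> ereal" and v :: "real ^ 'n"
  assumes proper: "\<And>i. proper_fun (f i)"
  shows "convex_conj (\<lambda>x. \<Sum>i\<in>UNIV. f i (x $ i)) v = (\<Sum>i\<in>UNIV. convex_conj (f i) (v $ i))"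
    (is "convex_conj ?g v = ?rhs")
proof -
  have split: "ereal (v \<bullet> x) - ?g x = (\<Sum>i\<in>UNIV. ereal (v $ i * x $ i) - f i (x $ i))" for x
    unfolding inner_vec_def inner_real_def
    by (rule ereal_minus_sum) (use proper in \<open>auto simp: proper_fun_def\<close>)
  have young: "ereal (v $ i * t) - f i t \<le> convex_conj (f i) (v $ i)" for i t
    using fenchel_young[of "v $ i" t "f i"] by (simp add: inner_real_def)
  have below: "ereal M < convex_conj ?g v" if M: "ereal M < ?rhs" for M
  proof -
    obtain m where m: "M < (\<Sum>i\<in>UNIV. m i)" "\<And>i. ereal (m i) < convex_conj (f i) (v $ i)"
      using ereal_less_sum_split[OF finite_class.finite_UNIV _ M] convex_conj_neq_MInfty[OF proper]
      by auto
    have "\<forall>i. \<exists>t. ereal (m i) < ereal (v $ i * t) - f i t"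
      using m(2) unfolding convex_conj_def less_SUP_iff inner_real_def by blast
    then obtain t where t: "\<And>i. ereal (m i) < ereal (v $ i * t i) - f i (t i)"
      by (metis choice)
    define x :: "real ^ 'n" where "x = (\<chi> i. t i)"
    have "ereal M < (\<Sum>i\<in>UNIV. ereal (m i))"
      using m(1) by (simp add: sum_ereal)
    also have "\<dots> \<le> (\<Sum>i\<in>UNIV. ereal (v $ i * x $ i) - f i (x $ i))"
      using t unfolding x_def by (intro sum_mono less_imp_le) simp
    also have "\<dots> = ereal (v \<bullet> x) - ?g x"
      by (rule split[symmetric])
    also have "\<dots> \<le> convex_conj ?g v"
      by (rule fenchel_young)
    finally show ?thesis .
  qed
  show ?thesis
  proof (rule antisym)
    show "convex_conj ?g v \<le> ?rhs"
      unfolding convex_conj_def[of ?g] split by (intro SUP_least sum_mono young)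
    show "?rhs \<le> convex_conj ?g v"
    proof (rule ccontr)
      assume "\<not> ?rhs \<le> convex_conj ?g v"
      then obtain M where "convex_conj ?g v < ereal M" "ereal M < ?rhs"
        by (auto simp: not_le dest: ereal_dense2)
      then show False using below by (meson order.asym)
    qed
  qed
qed

lemma convex_conj_plus_eta:
  "convex_conj (\<lambda>x. f x + eta (x \<in> C)) v = (SUP x\<in>C. ereal (v \<bullet> x) - f x)"
proof -
  define \<psi> where "\<psi> x = ereal (v \<bullet> x) - f x" for x
  have "convex_conj (\<lambda>x. f x + eta (x \<in> C)) v = (SUP x. if x \<in> C then \<psi> x else -\<infinity>)"
    unfolding convex_conj_def \<psi>_def eta_def by (intro SUP_cong) auto
  also have "\<dots> = (SUP x\<in>C. \<psi> x)"
  proof (rule antisym)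
    show "(SUP x. if x \<in> C then \<psi> x else -\<infinity>) \<le> (SUP x\<in>C. \<psi> x)"
      by (rule SUP_least) (auto intro: SUP_upper)
    show "(SUP x\<in>C. \<psi> x) \<le> (SUP x. if x \<in> C then \<psi> x else -\<infinity>)"
    proof (rule SUP_least)
      fix x assume "x \<in> C"
      then show "\<psi> x \<le> (SUP x. if x \<in> C then \<psi> x else -\<infinity>)"
        by (intro SUP_upper2[of x]) simp_all
    qed
  qed
  finally show ?thesis unfolding \<psi>_def .
qed

lemma convex_fun_scaleR_le:
  fixes h :: "'a::real_vector \<Rightarrow> ereal"
  assumes "convex_fun h" "h 0 = 0" "h y = ereal r" "0 \<le> s" "s \<le> 1"
  shows "h (s *\<^sub>R y) \<le> ereal (s * r)"
proof -
  have "(0, 0) \<in> epi h" "(y, r) \<in> epi h"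
    using assms(2,3) unfolding epi_def by auto
  then have "(1 - s) *\<^sub>R (0, 0) + s *\<^sub>R (y, r) \<in> epi h"
    using assms(1,4,5) unfolding convex_fun_def by (intro convexD) auto
  then show ?thesis unfolding epi_def by simp
qed

lemma SUP_punctured_nonneg:
  fixes h :: "real \<Rightarrow> ereal"
  assumes proper: "proper_fun h" and convex: "convex_fun h" and h0: "h 0 = 0"
    and acc: "0 islimpt edom h"
  shows "0 \<le> (SUP t\<in>-{0}. ereal (w * t) - h t)"
proof (rule ereal_le_epsilon2)
  fix e :: real assume e: "0 < e"
  obtain y where y: "y \<in> edom h" "y \<noteq> 0"
    using acc unfolding islimpt_def by blast
  then obtain r where r: "h y = ereal r"
    using proper unfolding edom_def proper_fun_def by (cases "h y") auto
  define K where "K = \<bar>w * y - r\<bar> + 1"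
  define s where "s = min 1 (e / K)"
  have K: "K > 0" "- K \<le> w * y - r"
    unfolding K_def by auto
  have s: "0 < s" "s \<le> 1" "s \<le> e / K"
    using e K(1) by (auto simp: s_def)
  then have sK: "s * K \<le> e"
    using K(1) by (simp add: pos_le_divide_eq)
  have "h (s * y) \<le> ereal (s * r)"
    using convex_fun_scaleR_le[OF convex h0 r, of s] s by simp
  then have "ereal (s * (w * y - r)) \<le> ereal (w * (s * y)) - h (s * y)"
    using proper unfolding proper_fun_def
    by (cases "h (s * y)") (auto simp: algebra_simps)
  moreover have "- e \<le> s * (w * y - r)"
    using mult_left_mono[OF K(2), of s] s(1) sK by simp
  ultimately have "ereal (- e) \<le> ereal (w * (s * y)) - h (s * y)"
    by (meson ereal_less_eq(3) order_trans)
  moreover have "s * y \<in> -{0}" using s y by simp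
  ultimately have "ereal (- e) \<le> (SUP t\<in>-{0}. ereal (w * t) - h t)" (is "_ \<le> ?S")
    by (intro SUP_upper2[of "s * y"]) auto
  then show "0 \<le> ?S + ereal e"
    by (cases ?S) auto
qed

lemma SUP_UNIV_eq_sup_punctured:
  fixes f :: "'a \<Rightarrow> 'b::complete_lattice"
  shows "(SUP x. f x) = sup (f a) (SUP x\<in>-{a}. f x)"
proof -
  have "UNIV = insert a (-{a})" by auto
  then show ?thesis by (metis SUP_insert)
qed

lemma SUP_punctured_eq_convex_conj:
  fixes h :: "real \<Rightarrow> ereal"
  assumes "proper_fun h" "convex_fun h" and h0: "h 0 = 0" and "0 islimpt edom h"
  shows "(SUP t\<in>-{0}. ereal (w * t) - h t) = convex_conj h w"
proof -
  have "convex_conj h w = max 0 (SUP t\<in>-{0}. ereal (w * t) - h t)"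
    unfolding convex_conj_def inner_real_def SUP_UNIV_eq_sup_punctured[where a = 0]
    using h0 by (simp add: sup_ereal_def zero_ereal_def)
  also have "\<dots> = (SUP t\<in>-{0}. ereal (w * t) - h t)"
    using SUP_punctured_nonneg[OF assms] by (rule max_absorb2)
  finally show ?thesis ..
qed

definition region_factor :: "'n set \<Rightarrow> 'n set \<Rightarrow> 'n \<Rightarrow> real set" where
  "region_factor S0 S1 i = (if i \<in> S0 then {0} else if i \<in> S1 then -{0} else UNIV)"

definition g_nu_comp :: "real \<Rightarrow> (real \<Rightarrow> ereal) \<Rightarrow> 'n set \<Rightarrow> 'n set \<Rightarrow> 'n \<Rightarrow> real \<Rightarrow> ereal" where
  "g_nu_comp lam h S0 S1 i t =
     ereal (if t = 0 then 0 else lam) + h t + eta (t \<in> region_factor S0 S1 i)"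

lemma region_iff_factors:
  "S0 \<inter> S1 = {} \<Longrightarrow> x \<in> region S0 S1 \<longleftrightarrow> (\<forall>i. x $ i \<in> region_factor S0 S1 i)"
  unfolding region_def region_factor_def by auto

lemma eta_Ball_eq_sum:
  "finite I \<Longrightarrow> eta (\<forall>i\<in>I. P i) = (\<Sum>i\<in>I. eta (P i))"
  by (induction I rule: finite_induct) (auto simp: eta_def sum_Pinfty)

lemma ereal_l0norm_eq_sum:
  "ereal (lam * real (l0norm x)) = (\<Sum>i\<in>UNIV. ereal (if x $ i = 0 then 0 else lam))"
proof -
  have "real (l0norm x) = (\<Sum>i\<in>UNIV. if x $ i = 0 then 0 else 1)"
    unfolding l0norm_def by (simp add: sum.If_cases Collect_neg_eq)
  then have "lam * real (l0norm x) = (\<Sum>i\<in>UNIV. if x $ i = 0 then 0 else lam)"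
    by (simp only: sum_distrib_left) (auto intro: sum.cong)
  then show ?thesis by (simp add: sum_ereal)
qed

lemma g_nu_eq_sum_comp:
  assumes "S0 \<inter> S1 = {}"
  shows "g_nu lam h S0 S1 x = (\<Sum>i\<in>UNIV. g_nu_comp lam h S0 S1 i (x $ i))"
  using eta_Ball_eq_sum[of UNIV "\<lambda>i. x $ i \<in> region_factor S0 S1 i"]
  unfolding g_nu_def g_nu_comp_def sum.distrib ereal_l0norm_eq_sum region_iff_factors[OF assms]
  by simp

lemma proper_g_nu_comp:
  assumes proper: "proper_fun h" and h0: "h 0 = 0" and acc: "0 islimpt edom h"
  shows "proper_fun (g_nu_comp lam h S0 S1 i)"
proof -
  obtain y where y: "y \<in> edom h" "y \<noteq> 0"
    using acc unfolding islimpt_def by blast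
  have "g_nu_comp lam h S0 S1 i 0 < \<infinity> \<or> g_nu_comp lam h S0 S1 i y < \<infinity>"
    using y h0 unfolding g_nu_comp_def region_factor_def eta_def edom_def by auto
  moreover have "g_nu_comp lam h S0 S1 i t \<noteq> -\<infinity>" for t
    using proper unfolding g_nu_comp_def eta_def proper_fun_def by auto
  ultimately show ?thesis unfolding proper_fun_def by blast
qed

lemma convex_conj_g_nu_comp:
  fixes h :: "real \<Rightarrow> ereal"
  assumes "proper_fun h" "convex_fun h" and h0: "h 0 = 0" and "0 islimpt edom h"
  shows "convex_conj (g_nu_comp lam h S0 S1 i) w =
    (if i \<in> S0 then 0
     else if i \<in> S1 then convex_conj h w - ereal lam
     else max (convex_conj h w - ereal lam) 0)"
proof -
  define \<phi> where "\<phi> t = ereal (w * t) - (ereal (if t = 0 then 0 else lam) + h t)" for t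
  have conj: "convex_conj (g_nu_comp lam h S0 S1 i) w = (SUP t\<in>region_factor S0 S1 i. \<phi> t)"
    unfolding g_nu_comp_def[abs_def] convex_conj_plus_eta \<phi>_def inner_real_def ..
  have \<phi>0: "\<phi> 0 = 0"
    using h0 by (simp add: \<phi>_def)
  have "\<phi> t = (ereal (w * t) - h t) - ereal lam" if "t \<noteq> 0" for t
    using that by (cases "h t") (simp_all add: \<phi>_def)
  then have "(SUP t\<in>-{0}. \<phi> t) = (SUP t\<in>-{0}. (ereal (w * t) - h t) - ereal lam)"
    by (intro SUP_cong) auto
  also have "\<dots> = (SUP t\<in>-{0}. ereal (w * t) - h t) - ereal lam"
    by (rule SUP_ereal_minus_left) auto
  finally have punct: "(SUP t\<in>-{0}. \<phi> t) = convex_conj h w - ereal lam"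
    using SUP_punctured_eq_convex_conj[OF assms] by simp
  have "(SUP t. \<phi> t) = max (convex_conj h w - ereal lam) 0"
    unfolding SUP_UNIV_eq_sup_punctured[where a = 0] \<phi>0 punct by (simp add: sup_ereal_def max.commute)
  then show ?thesis
    using \<phi>0 punct unfolding conj region_factor_def by auto
qed

theorem proposition3p2:
  fixes lam :: real and h :: "real \<Rightarrow> ereal"
    and S0 S1 Sb :: "'n::finite set"
  assumes lam_pos: "lam > 0"
    and proper: "proper_fun h" and closed: "closed_fun h" and convex: "convex_fun h"
    and h0: "h 0 = 0"
    and acc: "0 islimpt edom h"
    and partition: "S0 \<union> S1 \<union> Sb = UNIV" "S0 \<inter> S1 = {}" "S0 \<inter> Sb = {}" "S1 \<inter> Sb = {}"
  shows "\<forall>v :: real ^ 'n. convex_conj (g_nu lam h S0 S1) v =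
           (\<Sum>i\<in>UNIV.
              (if i \<in> S0 then 0
               else if i \<in> S1 then convex_conj h (v $ i) - ereal lam
               else max (convex_conj h (v $ i) - ereal lam) 0))"
proof -
  have "convex_conj (g_nu lam h S0 S1) v
      = (\<Sum>i\<in>UNIV. convex_conj (g_nu_comp lam h S0 S1 i) (v $ i))" for v :: "real ^ 'n"
    unfolding g_nu_eq_sum_comp[OF partition(2), abs_def]
    by (rule convex_conj_separable[OF proper_g_nu_comp[OF proper h0 acc]])
  then show ?thesis
    by (simp add: convex_conj_g_nu_comp[OF proper convex h0 acc])
qed

end
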